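(* Let $(X,\tau)$ be a kd-space and let $A\subseteq X$ be locally dense, i.e. $A\subseteq \mathrm{Int}(\mathrm{Cl}(A))$. Then the subspace $(A,\tau|A)$ is a kd-space.
   Context: A space is a kd-space if every compact subset is $\delta$-closed. In a space $Y$, a set $U$ is regular open if $U=\mathrm{Int}(\mathrm{Cl}(U))$; a point $x$ is a $\delta$-cluster point of $B\subseteq Y$ if $B\cap U\neq\emptyset$ for every regular open $U\ni x$; $B$ is $\delta$-closed if it contains all its $\delta$-cluster points. *)

theory Defs
  imports "HOL-Analysis.Analysis"
begin

definition regular_open_in :: "'a topology \<Rightarrow> 'a set \<Rightarrow> bool" where
  "regular_open_in X U \<longleftrightarrow> U = X interior_of (X closure_of U)"

definition delta_cluster_point :: "'a topology \<Rightarrow> 'a \<Rightarrow> 'a set \<Rightarrow> bool" where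
  "delta_cluster_point X x B \<longleftrightarrow> x \<in> topspace X \<and>
     (\<forall>U. regular_open_in X U \<and> x \<in> U \<longrightarrow> B \<inter> U \<noteq> {})"

definition delta_closed_in :: "'a topology \<Rightarrow> 'a set \<Rightarrow> bool" where
  "delta_closed_in X B \<longleftrightarrow> B \<subseteq> topspace X \<and>
     (\<forall>x. delta_cluster_point X x B \<longrightarrow> x \<in> B)"

definition kd_space :: "'a topology \<Rightarrow> bool" where
  "kd_space X \<longleftrightarrow> (\<forall>K. compactin X K \<longrightarrow> delta_closed_in X K)"

end

theory Submission
  imports Defs
begin

text \<open>For a locally dense A, the trace U \<inter> A of a regular open set U is regular open in the
  subspace A: if W is open in X and W \<inter> A \<subseteq> Cl(U \<inter> A), then A is dense in the open set
  W \<inter> Int(Cl A), so this set lies in Cl U and hence in Int(Cl U) = U. Therefore a delta-cluster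
  point in A of a set is one in X as well, and since a compact subset of A is compact in X, the
  delta-closedness of compact sets descends from X to A.\<close>

lemma regular_open_in_imp_openin: "regular_open_in X U \<Longrightarrow> openin X U"
  unfolding regular_open_in_def by (metis openin_interior_of)

lemma openin_subset_closure_of_from_dense_part:
  assumes "openin X W" "W \<subseteq> X closure_of A" "W \<inter> A \<subseteq> X closure_of B"
  shows "W \<subseteq> X closure_of B"
proof -
  have "W \<subseteq> W \<inter> X closure_of A" using assms(2) by blast
  also have "\<dots> \<subseteq> X closure_of (W \<inter> A)" using assms(1) by (rule openin_Int_closure_of_subset)
  also have "\<dots> \<subseteq> X closure_of B"
    using closure_of_mono[OF assms(3), of X] by simp
  finally show ?thesis .
qed

lemma regular_open_in_subtopology_Int:
  assumes U: "regular_open_in X U" and A: "A \<subseteq> X interior_of (X closure_of A)"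
  shows "regular_open_in (subtopology X A) (U \<inter> A)"
proof -
  have "openin X U" using U by (rule regular_open_in_imp_openin)
  have U_eq: "X interior_of (X closure_of U) = U"
    using U unfolding regular_open_in_def by (rule sym)
  let ?C = "X closure_of (U \<inter> A)"
  have "A \<inter> (U \<inter> A) = U \<inter> A" by blast
  then have cl: "subtopology X A closure_of (U \<inter> A) = A \<inter> ?C"
    by (simp only: closure_of_subtopology)
  have "U \<inter> A \<subseteq> subtopology X A interior_of (A \<inter> ?C)"
  proof (rule interior_of_maximal)
    show "U \<inter> A \<subseteq> A \<inter> ?C"
      using closure_of_subset[of "U \<inter> A" X] openin_subset[OF \<open>openin X U\<close>] by blast
    show "openin (subtopology X A) (U \<inter> A)"
      using \<open>openin X U\<close> by (rule openin_subtopology_Int)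
  qed
  moreover have "subtopology X A interior_of (A \<inter> ?C) \<subseteq> U \<inter> A"
  proof
    fix y assume "y \<in> subtopology X A interior_of (A \<inter> ?C)"
    then obtain W where W: "openin X W" "y \<in> W \<inter> A" "W \<inter> A \<subseteq> ?C"
      unfolding interior_of_def openin_subtopology by blast
    define W' where "W' = W \<inter> X interior_of (X closure_of A)"
    have "openin X W'" unfolding W'_def using W(1) by auto
    have "W' \<subseteq> ?C"
    proof (rule openin_subset_closure_of_from_dense_part[OF \<open>openin X W'\<close>])
      show "W' \<subseteq> X closure_of A"
        unfolding W'_def using interior_of_subset by (rule le_infI2)
      show "W' \<inter> A \<subseteq> ?C" unfolding W'_def using W(3) by blast
    qed
    also have "\<dots> \<subseteq> X closure_of U" by (rule closure_of_mono) blast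
    finally have "W' \<subseteq> X interior_of (X closure_of U)"
      using \<open>openin X W'\<close> by (rule interior_of_maximal)
    moreover have "y \<in> W'" unfolding W'_def using W(2) A by blast
    ultimately show "y \<in> U \<inter> A"
      using W(2) by (auto simp: U_eq)
  qed
  ultimately show ?thesis unfolding regular_open_in_def cl by blast
qed

lemma delta_cluster_point_subtopology_imp:
  assumes "delta_cluster_point (subtopology X A) x B" "A \<subseteq> X interior_of (X closure_of A)"
  shows "delta_cluster_point X x B"
  using assms regular_open_in_subtopology_Int[OF _ assms(2)]
  unfolding delta_cluster_point_def by fastforce

lemma delta_closed_in_subtopology:
  assumes "delta_closed_in X K" "K \<subseteq> A" "A \<subseteq> X interior_of (X closure_of A)"
  shows "delta_closed_in (subtopology X A) K"
  using assms delta_cluster_point_subtopology_imp[OF _ assms(3)]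
  unfolding delta_closed_in_def by auto

theorem mainTheorem5:
  fixes X :: "'a topology" and A :: "'a set"
  assumes "kd_space X"
    and "A \<subseteq> topspace X"
    and "A \<subseteq> X interior_of (X closure_of A)"
  shows "kd_space (subtopology X A)"
  unfolding kd_space_def
proof (intro allI impI)
  fix K assume "compactin (subtopology X A) K"
  then have "compactin X K" "K \<subseteq> A" by (auto simp: compactin_subtopology)
  then have "delta_closed_in X K" using assms(1) unfolding kd_space_def by blast
  then show "delta_closed_in (subtopology X A) K"
    using \<open>K \<subseteq> A\<close> assms(3) by (rule delta_closed_in_subtopology)
qed

end
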